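(* Consider the discrete-time closed-loop system $x(t+1)=f(x(t),v(t))$ with $x(t)\in\mathbb{R}^n$, $v(t)\in\mathbb{R}^m$, a constraint set $\mathcal{C}\subset\mathbb{R}^{n+m}$, a set $P\subseteq\mathbb{R}^{n+m}$ (not assumed invariant), $Q=Q^{\mathrm T}\succ0$, and a desired reference sequence $r(t)$. Assume A2, A3, A4 and A5 (see context) hold. Let $v(0)$ satisfy $(x(0),v(0))\in P$, and for $t\ge1$ let $v(t)$ be generated by the modified Command Governor (see context). Suppose there exist scalars $\varepsilon',\delta'>0$ such that, at every time $t$ with $\|x(t)-x_{v(t-1)}\|<\varepsilon'$, the resulting $v(t)$ is feasible, $(x(t),v(t))\in P$, and satisfies $$\|v(t)-r^*(t)\|_Q^2\le\max\{0,\ \|v(t-1)-r^*(t)\|_Q^2-(\delta')^2\},$$ where $r^*(t)=\arg\min_{v\in R_P}\|v-r(t)\|_Q^2$. Then: 1. $(x(t),v(t))\in\mathcal{C}$ for all $t\ge0$. 2. If $r(t)=r_0$ for all $t\ge\hat t$ and $r_0\in R_P$, then there is $T$ with $v(t)=r_0$ for all $t\ge T$. 3. If $r(t)=r_0$ for all $t\ge\hat t$ and $r_0\notin R_P$, then there is $T$ with $v(t)=r^*$ for all $t\ge T$, where $r^*=\arg\min_{v\in R_P}\|v-r_0\|_Q^2$.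
   Context: Notation: $\|w\|_Q^2=w^{\mathrm T}Qw$. For a constant reference $v$ and initial state $x_0$, $x(t;x_0,v)$ denotes the solution of $x(t+1)=f(x(t),v)$ with $x(0)=x_0$. The maximum output admissible set is $O_\infty=\{(x_0,v): (x(t;x_0,v),v)\in\mathcal{C}\ \forall t\in\mathbb{Z}_{\ge0}\}$. For $x\in\mathbb{R}^n$ let $P_x=\{v:(x,v)\in P\}$; for $v\in\mathbb{R}^m$ let $P_v=\{x:(x,v)\in P\}$. Assumptions: A2: For each $v$ there is a unique equilibrium $x_v$ with $f(x_v,v)=x_v$, and $v\mapsto x_v$ is Lipschitz continuous; the set $R_P=\{v:(x_v,v)\in P\}$ and the sets $P_x$ (for every $x$) are closed and convex. A3: There is $\varepsilon>0$ such that for every $v\in R_P$, $P_v$ contains the ball of radius $\varepsilon$ centered at $x_v$. A4: $P\subseteq O_\infty\subseteq\mathcal{C}$. A5: For any reference sequence $v(t)$ with $v(t)-v(t-1)\to0$, the corresponding solution satisfies $x(t)-x_{v(t)}\to0$ as $t\to\infty$. Modified Command Governor: at each time $t\ge1$, some (possibly suboptimal, arbitrary) candidate $v'\in\mathbb{R}^m$ for the problem $\min_v\|r(t)-v\|_Q^2$ s.t. $(x(t),v)\in P$ is produced. The candidate is accepted, $v(t)=v'$, if both $(x(t),v')\in P$ and $\|v'-r(t)\|_Q^2\le\|v(t-1)-r(t)\|_Q^2-\|v'-v(t-1)\|_Q^2$; otherwise it is rejected and $v(t)=v(t-1)$. *)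

theory Defs
  imports "HOL-Analysis.Analysis"
begin

definition qnorm2 :: "real^'m^'m \<Rightarrow> real^'m \<Rightarrow> real" where
  "qnorm2 Q w = w \<bullet> (Q *v w)"

definition traj :: "(real^'n \<Rightarrow> real^'m \<Rightarrow> real^'n) \<Rightarrow> real^'n \<Rightarrow> real^'m \<Rightarrow> nat \<Rightarrow> real^'n" where
  "traj f x0 v t = ((\<lambda>x. f x v) ^^ t) x0"

definition Oinf :: "(real^'n \<Rightarrow> real^'m \<Rightarrow> real^'n) \<Rightarrow> ((real^'n) \<times> (real^'m)) set \<Rightarrow> ((real^'n) \<times> (real^'m)) set" where
  "Oinf f C = {(x0, v). \<forall>t. (traj f x0 v t, v) \<in> C}"

definition secx :: "('a \<times> 'b) set \<Rightarrow> 'a \<Rightarrow> 'b set" where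
  "secx P x = {v. (x, v) \<in> P}"
definition secv :: "('a \<times> 'b) set \<Rightarrow> 'b \<Rightarrow> 'a set" where
  "secv P v = {x. (x, v) \<in> P}"

text \<open>R_P = {v. (x_v, v) \<in> P}, with xe the equilibrium map v \<mapsto> x_v.\<close>
definition RP :: "(real^'m \<Rightarrow> real^'n) \<Rightarrow> ((real^'n) \<times> (real^'m)) set \<Rightarrow> (real^'m) set" where
  "RP xe P = {v. (xe v, v) \<in> P}"

definition qproj :: "real^'m^'m \<Rightarrow> (real^'m) set \<Rightarrow> real^'m \<Rightarrow> real^'m" where
  "qproj Q R r = (THE w. w \<in> R \<and> (\<forall>u\<in>R. qnorm2 Q (w - r) \<le> qnorm2 Q (u - r)))"

definition cg_step :: "real^'m^'m \<Rightarrow> ((real^'n) \<times> (real^'m)) set \<Rightarrow> real^'n \<Rightarrow> real^'m \<Rightarrow> real^'m \<Rightarrow> real^'m \<Rightarrow> real^'m" where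
  "cg_step Q P x r vprev vc =
     (if (x, vc) \<in> P \<and> qnorm2 Q (vc - r) \<le> qnorm2 Q (vprev - r) - qnorm2 Q (vc - vprev)
      then vc else vprev)"

end

theory Submission
  imports Defs
begin

text \<open>
  Admissibility: the governor either keeps the previous reference, and \<open>O\<^sub>\<infinity>\<close> is invariant
  under the dynamics with that reference, or it accepts a candidate in \<open>P \<subseteq> O\<^sub>\<infinity>\<close>.

  Convergence: once \<open>r\<close> is constant, acceptance forces
  \<open>\<parallel>v(t) - v(t-1)\<parallel>\<^sub>Q\<^sup>2 \<le> \<parallel>v(t-1) - r\<parallel>\<^sub>Q\<^sup>2 - \<parallel>v(t) - r\<parallel>\<^sub>Q\<^sup>2\<close>, so these
  increments are summable and tend to zero. By A5 and Lipschitz continuity of \<open>v \<mapsto> x\<^sub>v\<close>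
  the state then eventually stays within \<open>\<epsilon>'\<close> of \<open>x\<^sub>v\<^sub>(\<^sub>t\<^sub>-\<^sub>1\<^sub>)\<close>, after which the distance
  to \<open>r\<^sup>*\<close> drops by \<open>\<delta>'\<^sup>2\<close> per step until it is zero.
\<close>

lemma qnorm2_0 [simp]: "qnorm2 Q 0 = 0"
  by (simp add: qnorm2_def)

lemma qnorm2_scaleR: "qnorm2 Q (c *\<^sub>R w) = c\<^sup>2 * qnorm2 Q w"
  by (simp add: qnorm2_def matrix_vector_mult_scaleR power2_eq_square)

context
  fixes Q :: "real^'m^'m"
  assumes Qpd: "\<And>w. w \<noteq> 0 \<Longrightarrow> qnorm2 Q w > 0"
begin

lemma qnorm2_nonneg: "0 \<le> qnorm2 Q w"
  using Qpd[of w] by (cases "w = 0") auto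

lemma qnorm2_le_0_iff: "qnorm2 Q w \<le> 0 \<longleftrightarrow> w = 0"
  using Qpd[of w] by (cases "w = 0") auto

lemma qnorm2_coercive: "\<exists>c>0. \<forall>w. c * (norm w)\<^sup>2 \<le> qnorm2 Q w"
proof -
  have cont: "continuous_on (sphere (0::real^'m) 1) (qnorm2 Q)"
    unfolding qnorm2_def by (intro continuous_intros)
  have "sphere (0::real^'m) 1 \<noteq> {}"
    using norm_axis_1 by (metis mem_sphere_0 empty_iff)
  then obtain w0 where w0: "w0 \<in> sphere 0 1"
    and min: "\<And>w. w \<in> sphere 0 1 \<Longrightarrow> qnorm2 Q w0 \<le> qnorm2 Q w"
    using continuous_attains_inf[OF compact_sphere _ cont] by blast
  have "qnorm2 Q w0 * (norm w)\<^sup>2 \<le> qnorm2 Q w" for w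
  proof (cases "w = 0")
    case False
    then have "qnorm2 Q w0 \<le> (1 / norm w)\<^sup>2 * qnorm2 Q w"
      using min[of "(1 / norm w) *\<^sub>R w"] by (simp add: qnorm2_scaleR)
    with False show ?thesis by (simp add: field_simps)
  qed simp
  moreover have "qnorm2 Q w0 > 0"
    using Qpd w0 by (metis mem_sphere_0 norm_zero zero_neq_one)
  ultimately show ?thesis by blast
qed

lemma qproj_of_mem:
  assumes "r \<in> R"
  shows "qproj Q R r = r"
  unfolding qproj_def
proof (rule the_equality)
  show "r \<in> R \<and> (\<forall>u\<in>R. qnorm2 Q (r - r) \<le> qnorm2 Q (u - r))"
    using assms by (simp add: qnorm2_nonneg)
next
  fix w assume "w \<in> R \<and> (\<forall>u\<in>R. qnorm2 Q (w - r) \<le> qnorm2 Q (u - r))"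
  then have "qnorm2 Q (w - r) \<le> 0"
    using assms by fastforce
  then show "w = r"
    by (simp add: qnorm2_le_0_iff)
qed

end

lemma cg_step_cases:
  obtains "(x, cg_step Q P x r vprev vc) \<in> P"
    and "qnorm2 Q (cg_step Q P x r vprev vc - vprev)
           \<le> qnorm2 Q (vprev - r) - qnorm2 Q (cg_step Q P x r vprev vc - r)"
  | "cg_step Q P x r vprev vc = vprev"
  unfolding cg_step_def
  by (cases "(x, vc) \<in> P \<and> qnorm2 Q (vc - r) \<le> qnorm2 Q (vprev - r) - qnorm2 Q (vc - vprev)") auto

lemma cg_step_decrease:
  "qnorm2 Q (cg_step Q P x r vprev vc - vprev)
     \<le> qnorm2 Q (vprev - r) - qnorm2 Q (cg_step Q P x r vprev vc - r)"
  by (cases rule: cg_step_cases[of x Q P r vprev vc]) auto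

lemma traj_Suc_start: "traj f (f y w) w t = traj f y w (Suc t)"
  unfolding traj_def by (simp add: funpow_Suc_right del: funpow.simps)

lemma Oinf_step: "(y, w) \<in> Oinf f C \<Longrightarrow> (f y w, w) \<in> Oinf f C"
  unfolding Oinf_def by (simp add: traj_Suc_start)

lemma cg_closed_loop_in_Oinf:
  assumes P_sub: "P \<subseteq> Oinf f C"
    and dyn: "\<And>t. x (Suc t) = f (x t) (v t)"
    and init: "(x 0, v 0) \<in> P"
    and cg: "\<And>t. t \<ge> 1 \<Longrightarrow> v t = cg_step Q P (x t) (r t) (v (t - 1)) (cand t)"
  shows "(x t, v t) \<in> Oinf f C"
proof (induction t)
  case 0
  show ?case using init P_sub by blast
next
  case (Suc t)
  have "v (Suc t) = cg_step Q P (x (Suc t)) (r (Suc t)) (v t) (cand (Suc t))"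
    using cg[of "Suc t"] by simp
  then show ?case
    using Oinf_step[OF Suc.IH] dyn[of t] P_sub
    by (cases rule: cg_step_cases[of "x (Suc t)" Q P "r (Suc t)" "v t" "cand (Suc t)"]) auto
qed

lemma tendsto_zero_if_bounded_by_decrements:
  fixes V :: "nat \<Rightarrow> real" and D :: "nat \<Rightarrow> 'a::real_normed_vector"
  assumes "c > 0"
    and dec: "\<And>t. t \<ge> th \<Longrightarrow> c * (norm (D t))\<^sup>2 \<le> V t - V (Suc t)"
    and V_nonneg: "\<And>t. 0 \<le> V t"
  shows "D \<longlonglongrightarrow> 0"
proof -
  define W where "W k = V (k + th)" for k
  have "W (Suc k) \<le> W k" for k
    using dec[of "k + th"] \<open>c > 0\<close> unfolding W_def
    by (smt (verit) add_Suc le_add2 zero_le_mult_iff zero_le_power2)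
  then have "decseq W"
    by (simp add: decseq_Suc_iff)
  then obtain l where "W \<longlonglongrightarrow> l"
    using decseq_convergent[of W 0] V_nonneg unfolding W_def by blast
  then have W_diff: "(\<lambda>k. (W k - W (Suc k)) / c) \<longlonglongrightarrow> 0"
    using tendsto_divide[OF tendsto_diff[OF _ LIMSEQ_Suc], of W l W l "\<lambda>_. c" c] \<open>c > 0\<close> by simp
  have "(\<lambda>k. (norm (D (k + th)))\<^sup>2) \<longlonglongrightarrow> 0"
  proof (rule tendsto_sandwich[OF _ _ tendsto_const W_diff])
    show "\<forall>\<^sub>F k in sequentially. (norm (D (k + th)))\<^sup>2 \<le> (W k - W (Suc k)) / c"
      using dec \<open>c > 0\<close> unfolding W_def by (simp add: field_simps mult.commute)
  qed simp
  then have "(\<lambda>k. norm (D (k + th))) \<longlonglongrightarrow> 0"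
    using tendsto_real_sqrt by fastforce
  then show ?thesis
    using LIMSEQ_offset tendsto_norm_zero_iff by blast
qed

lemma eventually_le_0_if_uniform_decrease:
  fixes a :: "nat \<Rightarrow> real"
  assumes "d > 0"
    and dec: "\<And>t. t \<ge> M \<Longrightarrow> a (Suc t) \<le> max 0 (a t - d)"
  shows "\<exists>T. \<forall>t\<ge>T. a t \<le> 0"
proof -
  have bound: "a (M + k) \<le> max 0 (a M - real k * d)" for k
  proof (induction k)
    case (Suc k)
    have "a (M + Suc k) \<le> max 0 (a (M + k) - d)"
      using dec[of "M + k"] by simp
    also have "\<dots> \<le> max 0 (a M - real (Suc k) * d)"
      using Suc.IH \<open>d > 0\<close> by (simp add: algebra_simps)
    finally show ?case .
  qed simp
  obtain k :: nat where "a M / d \<le> real k"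
    using real_arch_simple by blast
  then have "a M \<le> real k * d"
    using \<open>d > 0\<close> by (simp add: field_simps)
  have "a t \<le> 0" if "t \<ge> M + k" for t
  proof -
    have "real k * d \<le> real (t - M) * d"
      using that \<open>d > 0\<close> by (intro mult_right_mono) auto
    with \<open>a M \<le> real k * d\<close> have "a M \<le> real (t - M) * d"
      by linarith
    then show ?thesis
      using bound[of "t - M"] that by simp
  qed
  then show ?thesis by blast
qed

lemma cg_increments_tendsto_zero:
  fixes Q :: "real^'m^'m"
  assumes Qpd: "\<And>w. w \<noteq> 0 \<Longrightarrow> qnorm2 Q w > 0"
    and cg: "\<And>t. t \<ge> 1 \<Longrightarrow> v t = cg_step Q P (x t) (r t) (v (t - 1)) (cand t)"
    and r_const: "\<And>t. t \<ge> th \<Longrightarrow> r t = r0"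
  shows "(\<lambda>t. v (Suc t) - v t) \<longlonglongrightarrow> 0"
proof -
  obtain c where "c > 0" and c: "\<And>w. c * (norm w)\<^sup>2 \<le> qnorm2 Q w"
    using qnorm2_coercive[OF Qpd] by blast
  have decrements: "c * (norm (v (Suc t) - v t))\<^sup>2 \<le> qnorm2 Q (v t - r0) - qnorm2 Q (v (Suc t) - r0)"
    if "t \<ge> th" for t
    using c[of "v (Suc t) - v t"] cg_step_decrease[of Q P "x (Suc t)" r0 "v t" "cand (Suc t)"]
      cg[of "Suc t"] r_const[of "Suc t"] that
    by simp
  have "0 \<le> qnorm2 Q w" for w
    using Qpd by (rule qnorm2_nonneg)
  with \<open>c > 0\<close> decrements show ?thesis
    by (rule tendsto_zero_if_bounded_by_decrements)
qed

lemma state_tracks_previous_equilibrium: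
  fixes xe :: "'a::real_normed_vector \<Rightarrow> 'b::real_normed_vector"
  assumes Lip: "L-lipschitz_on UNIV xe"
    and A5: "\<And>vs xs. (\<forall>t. xs (Suc t) = f (xs t) (vs t)) \<Longrightarrow>
               (\<lambda>t. vs (Suc t) - vs t) \<longlonglongrightarrow> 0 \<Longrightarrow>
               (\<lambda>t. xs t - xe (vs t)) \<longlonglongrightarrow> 0"
    and dyn: "\<And>t. x (Suc t) = f (x t) (v t)"
    and increments: "(\<lambda>t. v (Suc t) - v t) \<longlonglongrightarrow> 0"
  shows "(\<lambda>t. x (Suc t) - xe (v t)) \<longlonglongrightarrow> 0"
proof -
  have "(\<lambda>t. x t - xe (v t)) \<longlonglongrightarrow> 0"
    using A5 dyn increments by blast
  then have tracking: "(\<lambda>t. x (Suc t) - xe (v (Suc t))) \<longlonglongrightarrow> 0"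
    by (rule LIMSEQ_Suc)
  have "(\<lambda>t. xe (v (Suc t)) - xe (v t)) \<longlonglongrightarrow> 0"
  proof (rule Lim_null_comparison[where g = "\<lambda>t. L * norm (v (Suc t) - v t)"])
    show "\<forall>\<^sub>F t in sequentially. norm (xe (v (Suc t)) - xe (v t)) \<le> L * norm (v (Suc t) - v t)"
      using lipschitz_onD[OF Lip] by (simp add: dist_norm)
    show "(\<lambda>t. L * norm (v (Suc t) - v t)) \<longlonglongrightarrow> 0"
      using tendsto_mult_right_zero[OF tendsto_norm_zero[OF increments]] .
  qed
  from tendsto_add_zero[OF tracking this] show ?thesis
    by simp
qed

lemma cg_reaches_projection:
  fixes Q :: "real^'m^'m"
  assumes Qpd: "\<And>w. w \<noteq> 0 \<Longrightarrow> qnorm2 Q w > 0"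
    and Lip: "L-lipschitz_on UNIV xe"
    and A5: "\<And>vs xs. (\<forall>t. xs (Suc t) = f (xs t) (vs t)) \<Longrightarrow>
               (\<lambda>t. vs (Suc t) - vs t) \<longlonglongrightarrow> 0 \<Longrightarrow>
               (\<lambda>t. xs t - xe (vs t)) \<longlonglongrightarrow> 0"
    and dyn: "\<And>t. x (Suc t) = f (x t) (v t)"
    and cg: "\<And>t. t \<ge> 1 \<Longrightarrow> v t = cg_step Q P (x t) (r t) (v (t - 1)) (cand t)"
    and "\<epsilon> > 0" "\<delta> > 0"
    and decrease: "\<And>t. t \<ge> 1 \<Longrightarrow> norm (x t - xe (v (t - 1))) < \<epsilon> \<Longrightarrow>
          qnorm2 Q (v t - qproj Q R (r t)) \<le> max 0 (qnorm2 Q (v (t - 1) - qproj Q R (r t)) - \<delta>\<^sup>2)"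
    and r_const: "\<And>t. t \<ge> th \<Longrightarrow> r t = r0"
  shows "\<exists>T. \<forall>t\<ge>T. v t = qproj Q R r0"
proof -
  have "(\<lambda>t. x (Suc t) - xe (v t)) \<longlonglongrightarrow> 0"
    by (rule state_tracks_previous_equilibrium[of L xe f x v, OF Lip A5 dyn
          cg_increments_tendsto_zero[where P = P and cand = cand, OF Qpd cg r_const]])
  then obtain N where N: "\<And>t. t \<ge> N \<Longrightarrow> norm (x (Suc t) - xe (v t)) < \<epsilon>"
    using \<open>\<epsilon> > 0\<close> unfolding LIMSEQ_iff by fastforce
  define a where "a t = qnorm2 Q (v t - qproj Q R r0)" for t
  have "a (Suc t) \<le> max 0 (a t - \<delta>\<^sup>2)" if "t \<ge> max N th" for t
  proof -
    have "norm (x (Suc t) - xe (v (Suc t - 1))) < \<epsilon>" and "r (Suc t) = r0"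
      using N r_const that by auto
    then show ?thesis
      using decrease[of "Suc t"] unfolding a_def by simp
  qed
  then obtain T where "\<And>t. t \<ge> T \<Longrightarrow> a t \<le> 0"
    using eventually_le_0_if_uniform_decrease[of "\<delta>\<^sup>2" "max N th" a] \<open>\<delta> > 0\<close> by auto
  then show ?thesis
    unfolding a_def by (auto simp: qnorm2_le_0_iff[OF Qpd])
qed

theorem theorem2:
  fixes f :: "real^'n \<Rightarrow> real^'m \<Rightarrow> real^'n"
    and C P :: "((real^'n) \<times> (real^'m)) set"
    and Q :: "real^'m^'m"
    and xe :: "real^'m \<Rightarrow> real^'n"
    and x :: "nat \<Rightarrow> real^'n"
    and v cand r :: "nat \<Rightarrow> real^'m"
  assumes Qsym: "transpose Q = Q"
    and Qpd: "\<And>w. w \<noteq> 0 \<Longrightarrow> qnorm2 Q w > 0"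
    \<comment> \<open>A2\<close>
    and A2_eq: "\<And>w. f (xe w) w = xe w"
    and A2_uniq: "\<And>w y. f y w = y \<Longrightarrow> y = xe w"
    and A2_lip: "\<exists>L. L-lipschitz_on UNIV xe"
    and A2_RP: "closed (RP xe P) \<and> convex (RP xe P)"
    and A2_Px: "\<And>y. closed (secx P y) \<and> convex (secx P y)"
    \<comment> \<open>A3\<close>
    and A3: "\<exists>\<epsilon>>0. \<forall>w\<in>RP xe P. ball (xe w) \<epsilon> \<subseteq> secv P w"
    \<comment> \<open>A4\<close>
    and A4: "P \<subseteq> Oinf f C \<and> Oinf f C \<subseteq> C"
    \<comment> \<open>A5\<close>
    and A5: "\<And>vs xs. (\<forall>t. xs (Suc t) = f (xs t) (vs t)) \<Longrightarrow>
               (\<lambda>t. vs (Suc t) - vs t) \<longlonglongrightarrow> 0 \<Longrightarrow>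
               (\<lambda>t. xs t - xe (vs t)) \<longlonglongrightarrow> 0"
    \<comment> \<open>R_P nonempty, implicit in the definition of r*(t) as an argmin over R_P\<close>
    and RP_ne: "RP xe P \<noteq> {}"
    \<comment> \<open>closed loop and governor\<close>
    and dyn: "\<And>t. x (Suc t) = f (x t) (v t)"
    and init: "(x 0, v 0) \<in> P"
    and cg: "\<And>t. t \<ge> 1 \<Longrightarrow> v t = cg_step Q P (x t) (r t) (v (t - 1)) (cand t)"
    and hyp: "\<exists>\<epsilon>' \<delta>'. \<epsilon>' > 0 \<and> \<delta>' > 0 \<and>
       (\<forall>t\<ge>1. norm (x t - xe (v (t - 1))) < \<epsilon>' \<longrightarrow>
          (x t, v t) \<in> P \<and>
          qnorm2 Q (v t - qproj Q (RP xe P) (r t))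
            \<le> max 0 (qnorm2 Q (v (t - 1) - qproj Q (RP xe P) (r t)) - \<delta>'\<^sup>2))"
  shows "(\<forall>t. (x t, v t) \<in> C)
    \<and> (\<forall>r0 th. (\<forall>t\<ge>th. r t = r0) \<and> r0 \<in> RP xe P \<longrightarrow> (\<exists>T. \<forall>t\<ge>T. v t = r0))
    \<and> (\<forall>r0 th. (\<forall>t\<ge>th. r t = r0) \<and> r0 \<notin> RP xe P \<longrightarrow>
          (\<exists>T. \<forall>t\<ge>T. v t = qproj Q (RP xe P) r0))"
proof -
  obtain \<epsilon>' \<delta>' where "\<epsilon>' > 0" "\<delta>' > 0" and governed:
    "\<And>t. t \<ge> 1 \<Longrightarrow> norm (x t - xe (v (t - 1))) < \<epsilon>' \<Longrightarrow>
       qnorm2 Q (v t - qproj Q (RP xe P) (r t))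
         \<le> max 0 (qnorm2 Q (v (t - 1) - qproj Q (RP xe P) (r t)) - \<delta>'\<^sup>2)"
    using hyp by blast
  obtain L where Lip: "L-lipschitz_on UNIV xe"
    using A2_lip by blast
  have admissible: "\<forall>t. (x t, v t) \<in> C"
    using cg_closed_loop_in_Oinf[OF _ dyn init cg] A4 by blast
  have converges: "\<exists>T. \<forall>t\<ge>T. v t = qproj Q (RP xe P) r0" if "\<forall>t\<ge>th. r t = r0" for r0 th
    using cg_reaches_projection[OF Qpd Lip A5 dyn cg \<open>\<epsilon>' > 0\<close> \<open>\<delta>' > 0\<close> governed] that
    by blast
  show ?thesis
    using admissible converges qproj_of_mem[OF Qpd] by metis
qed

end
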